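(* If $p$ is prime, then $f_p$ is not oblivious to $p$; that is, for every asynchronous binary transducer for $f_p$, every accessible cycle has length a multiple of $p$.
   Context: An asynchronous binary transducer is $(S,s_0,t,o)$ with $S$ finite, $s_0\in S$, $t\colon S\times\{0,1\}\to S$, $o\colon S\times\{0,1\}\to\{0,1\}^*$; $t$ and $o$ extend to words: for $s\in S$ and $\sigma_1\sigma_2\cdots$ let $s_1=s$, $s_{n+1}=t(s_n,\sigma_n)$, $t(s,\sigma_1\cdots\sigma_n)=s_{n+1}$, $o(s,\sigma_1\sigma_2\cdots)=o(s_1,\sigma_1)o(s_2,\sigma_2)\cdots$. It is a transducer for a homeomorphism $f$ of $\{0,1\}^\omega$ if $f(\psi)=o(s_0,\psi)$ for all $\psi$. A state $s$ is accessible if $s=t(s_0,\alpha)$ for some finite word $\alpha$. A cycle is a pair $(c,\gamma)$ with $c\in S$ and $\gamma$ a nonempty finite word with $t(c,\gamma)=c$; its length is $|\gamma|$; it is accessible if $c$ is. A transducer is oblivious to $p$ if it has an accessible cycle whose length is not a multiple of $p$; a rational homeomorphism is oblivious to $p$ if some transducer for it is. $f_p$ is the homeomorphism switching the digits in positions $p,2p,3p,\ldots$ of a binary sequence and leaving other digits unchanged. *)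

theory Defs
  imports "HOL-Computational_Algebra.Primes"
begin

text \<open>Binary digits are bool; finite words are bool lists; infinite binary
sequences are functions nat \<Rightarrow> bool (index 0 is the first digit).\<close>

fun trans_word :: "('s \<Rightarrow> bool \<Rightarrow> 's) \<Rightarrow> 's \<Rightarrow> bool list \<Rightarrow> 's" where
  "trans_word t s [] = s"
| "trans_word t s (a # w) = trans_word t (t s a) w"

fun out_word :: "('s \<Rightarrow> bool \<Rightarrow> 's) \<Rightarrow> ('s \<Rightarrow> bool \<Rightarrow> bool list) \<Rightarrow> 's \<Rightarrow> bool list \<Rightarrow> bool list" where
  "out_word t oo s [] = []"
| "out_word t oo s (a # w) = oo s a @ out_word t oo (t s a) w"

definition seq_prefix :: "nat \<Rightarrow> (nat \<Rightarrow> bool) \<Rightarrow> bool list" where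
  "seq_prefix n \<psi> = map \<psi> [0..<n]"

definition is_prefix_of_seq :: "bool list \<Rightarrow> (nat \<Rightarrow> bool) \<Rightarrow> bool" where
  "is_prefix_of_seq w \<phi> \<longleftrightarrow> (\<forall>i<length w. w ! i = \<phi> i)"

text \<open>(S, s0, t, o) is an asynchronous binary transducer and the infinite output
o(s0, psi) (the concatenation of the outputs along psi) equals f psi:
all finite partial outputs are prefixes of f psi and their lengths are unbounded.\<close>
definition transducer_for ::
  "'s set \<Rightarrow> 's \<Rightarrow> ('s \<Rightarrow> bool \<Rightarrow> 's) \<Rightarrow> ('s \<Rightarrow> bool \<Rightarrow> bool list) \<Rightarrow> ((nat \<Rightarrow> bool) \<Rightarrow> (nat \<Rightarrow> bool)) \<Rightarrow> bool" where
  "transducer_for S s0 t oo f \<longleftrightarrow>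
     finite S \<and> s0 \<in> S \<and> (\<forall>s\<in>S. \<forall>a. t s a \<in> S) \<and>
     (\<forall>\<psi> n. is_prefix_of_seq (out_word t oo s0 (seq_prefix n \<psi>)) (f \<psi>)) \<and>
     (\<forall>\<psi> m. \<exists>n. m \<le> length (out_word t oo s0 (seq_prefix n \<psi>)))"

definition accessible_cycle :: "'s \<Rightarrow> ('s \<Rightarrow> bool \<Rightarrow> 's) \<Rightarrow> 's \<Rightarrow> bool list \<Rightarrow> bool" where
  "accessible_cycle s0 t c \<gamma> \<longleftrightarrow>
     (\<exists>\<alpha>. trans_word t s0 \<alpha> = c) \<and> \<gamma> \<noteq> [] \<and> trans_word t c \<gamma> = c"

text \<open>f_p switches the digits in positions p, 2p, 3p, ... (1-based positions),
i.e. 0-based indices i with p dvd (i+1).\<close>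
definition f_switch :: "nat \<Rightarrow> (nat \<Rightarrow> bool) \<Rightarrow> (nat \<Rightarrow> bool)" where
  "f_switch p \<psi> = (\<lambda>i. if p dvd (i + 1) then \<not> \<psi> i else \<psi> i)"

end

theory Submission
  imports Defs "HOL-Library.Omega_Words_Fun"
begin

text \<open>If a state c is reached both by \<alpha> and by \<alpha>\<gamma>, then for every tail \<beta> the
outputs on \<alpha>\<beta> and on \<alpha>\<gamma>\<beta> continue identically once c is reached. For f_p,
which changes each digit only in place, this forces the output lag of \<alpha>\<gamma> over
\<alpha> to be exactly |\<gamma>|, and the set of switched positions to be invariant under a
shift by |\<gamma>|; hence p divides |\<gamma>|.\<close>

lemma seq_prefix_eq_prefix: "seq_prefix n \<psi> = prefix n \<psi>"
  by (simp add: seq_prefix_def subsequence_def)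

lemma trans_word_append: "trans_word t s (xs @ ys) = trans_word t (trans_word t s xs) ys"
  by (induction xs arbitrary: s) auto

lemma out_word_append:
  "out_word t oo s (xs @ ys) = out_word t oo s xs @ out_word t oo (trans_word t s xs) ys"
  by (induction xs arbitrary: s) auto

lemma out_word_seq_prefix_mono:
  assumes "n \<le> n'"
  obtains ys where "out_word t oo s (seq_prefix n' \<psi>) = out_word t oo s (seq_prefix n \<psi>) @ ys"
proof -
  have "seq_prefix n' \<psi> = seq_prefix n \<psi> @ subsequence \<psi> n n'"
    using subsequence_append[where i = n and j = "n' - n" and w = \<psi>] assms by (simp add: seq_prefix_eq_prefix)
  then show thesis
    using that by (simp add: out_word_append)
qed

lemma is_prefix_of_seq_append:
  "is_prefix_of_seq (u @ v) \<phi> \<longleftrightarrow> is_prefix_of_seq u \<phi> \<and> is_prefix_of_seq v (suffix (length u) \<phi>)"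
proof -
  have "(\<forall>i<length u + length v. P i) \<longleftrightarrow> (\<forall>i<length u. P i) \<and> (\<forall>i<length v. P (length u + i))"
    for P :: "nat \<Rightarrow> bool"
  proof (intro iffI allI impI)
    fix i assume "(\<forall>i<length u. P i) \<and> (\<forall>i<length v. P (length u + i))" "i < length u + length v"
    then show "P i"
      by (cases "i < length u") (auto dest: spec[of _ "i - length u"])
  qed auto
  then show ?thesis
    unfolding is_prefix_of_seq_def by (simp add: nth_append)
qed

lemma is_prefix_of_seq_unique:
  assumes "\<And>n. is_prefix_of_seq (w n) \<phi>" and "\<And>n. is_prefix_of_seq (w n) \<psi>"
    and "\<And>m. \<exists>n. m < length (w n)"
  shows "\<phi> = \<psi>"
proof
  fix i
  obtain n where "i < length (w n)"
    using assms(3) by blast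
  then show "\<phi> i = \<psi> i"
    using assms(1,2)[of n] unfolding is_prefix_of_seq_def by simp
qed

lemma transducer_forD:
  assumes "transducer_for S s0 t oo f"
  shows "is_prefix_of_seq (out_word t oo s0 (seq_prefix n \<psi>)) (f \<psi>)"
    and "\<exists>n. m \<le> length (out_word t oo s0 (seq_prefix n \<psi>))"
  using assms unfolding transducer_for_def by simp_all

lemma transducer_for_output_from_state:
  assumes tr: "transducer_for S s0 t oo f" and c: "trans_word t s0 u = c"
  shows "is_prefix_of_seq (out_word t oo c (seq_prefix n \<beta>))
           (suffix (length (out_word t oo s0 u)) (f (u \<frown> \<beta>)))"
    and "\<exists>n. m < length (out_word t oo c (seq_prefix n \<beta>))"
proof -
  have split: "out_word t oo s0 (seq_prefix (length u + n) (u \<frown> \<beta>))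
      = out_word t oo s0 u @ out_word t oo c (seq_prefix n \<beta>)" for n
    using c by (simp add: seq_prefix_eq_prefix out_word_append)
  from transducer_forD(1)[OF tr, of "length u + n" "u \<frown> \<beta>"]
  show "is_prefix_of_seq (out_word t oo c (seq_prefix n \<beta>))
      (suffix (length (out_word t oo s0 u)) (f (u \<frown> \<beta>)))"
    unfolding split is_prefix_of_seq_append by blast
  obtain n where n: "length (out_word t oo s0 u) + m < length (out_word t oo s0 (seq_prefix n (u \<frown> \<beta>)))"
    using transducer_forD(2)[OF tr, of "Suc (length (out_word t oo s0 u) + m)"] by (auto simp: Suc_le_eq)
  obtain ys where "out_word t oo s0 (seq_prefix (length u + n) (u \<frown> \<beta>))
      = out_word t oo s0 (seq_prefix n (u \<frown> \<beta>)) @ ys"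
    by (rule out_word_seq_prefix_mono[OF le_add2])
  then have "length (out_word t oo s0 (seq_prefix n (u \<frown> \<beta>)))
      \<le> length (out_word t oo s0 (seq_prefix (length u + n) (u \<frown> \<beta>)))"
    by simp
  moreover have "length (out_word t oo s0 (seq_prefix (length u + n) (u \<frown> \<beta>)))
      = length (out_word t oo s0 u) + length (out_word t oo c (seq_prefix n \<beta>))"
    by (simp add: split)
  ultimately show "\<exists>n. m < length (out_word t oo c (seq_prefix n \<beta>))"
    using n by (intro exI[of _ n]) linarith
qed

lemma transducer_for_same_state_same_output:
  assumes tr: "transducer_for S s0 t oo f"
    and "trans_word t s0 u = c" and "trans_word t s0 v = c"
  shows "suffix (length (out_word t oo s0 u)) (f (u \<frown> \<beta>))
       = suffix (length (out_word t oo s0 v)) (f (v \<frown> \<beta>))"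
  using assms
  by (intro is_prefix_of_seq_unique[where w = "\<lambda>n. out_word t oo c (seq_prefix n \<beta>)"]
      transducer_for_output_from_state)

lemma f_switch_conc_eq:
  assumes eq: "\<And>\<beta>. f_switch p (u \<frown> \<beta>) j = f_switch p (v \<frown> \<beta>) k"
    and "length u \<le> j" and "length v \<le> k"
  shows "j - length u = k - length v" and "p dvd j + 1 \<longleftrightarrow> p dvd k + 1"
proof -
  have eq': "(if p dvd j + 1 then \<not> \<beta> (j - length u) else \<beta> (j - length u))
      = (if p dvd k + 1 then \<not> \<beta> (k - length v) else \<beta> (k - length v))" for \<beta>
    using eq[of \<beta>] assms(2,3) by (auto simp: f_switch_def conc_def)
  show switched: "p dvd j + 1 \<longleftrightarrow> p dvd k + 1"
    using eq'[of "\<lambda>_. False"] by (auto split: if_splits)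
  show "j - length u = k - length v"
  proof (rule ccontr)
    assume "j - length u \<noteq> k - length v"
    then show False
      using eq'[of "(=) (j - length u)"] switched by (auto split: if_splits)
  qed
qed

lemma f_switch_conc_shift_dvd:
  assumes "p > 0"
    and agree: "\<And>\<beta> i. f_switch p (u \<frown> \<beta>) (a + i) = f_switch p ((u @ w) \<frown> \<beta>) (b + i)"
  shows "p dvd length w"
proof -
  define N where "N = length (u @ w)"
  have "a + N - length u = b + N - N"
    using f_switch_conc_eq(1)[OF agree] by (simp add: N_def)
  then have b: "b = a + length w"
    by (simp add: N_def)
  \<comment> \<open>an index i \<ge> N for which the output position a + i is switched\<close>
  define i where "i = p * (a + N + 1) - (a + 1)"
  have "a + N + 1 \<le> p * (a + N + 1)"
    using \<open>p > 0\<close> by (cases p) simp_all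
  then have i: "a + i + 1 = p * (a + N + 1)" and "N \<le> i"
    unfolding i_def by linarith+
  moreover have "length u \<le> a + i" and "length (u @ w) \<le> b + i"
    using \<open>N \<le> i\<close> by (simp_all add: N_def)
  ultimately have "p dvd b + i + 1"
    using f_switch_conc_eq(2)[OF agree] by (metis dvd_triv_left)
  then have "p dvd (a + i + 1) + length w"
    using b by (simp add: ac_simps)
  moreover have "p dvd a + i + 1"
    using i by simp
  ultimately show ?thesis
    using dvd_add_right_iff by blast
qed

theorem lemma3p3:
  fixes p :: nat and S :: "'s set" and s0 :: 's
    and t :: "'s \<Rightarrow> bool \<Rightarrow> 's" and oo :: "'s \<Rightarrow> bool \<Rightarrow> bool list"
  assumes "prime p"
    and "transducer_for S s0 t oo (f_switch p)"
  shows "\<forall>c \<gamma>. accessible_cycle s0 t c \<gamma> \<longrightarrow> p dvd length \<gamma>"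
proof (intro allI impI)
  fix c \<gamma> assume "accessible_cycle s0 t c \<gamma>"
  then obtain \<alpha> where \<alpha>: "trans_word t s0 \<alpha> = c" and "trans_word t c \<gamma> = c"
    unfolding accessible_cycle_def by blast
  then have \<alpha>\<gamma>: "trans_word t s0 (\<alpha> @ \<gamma>) = c"
    by (simp add: trans_word_append)
  have "f_switch p (\<alpha> \<frown> \<beta>) (length (out_word t oo s0 \<alpha>) + i)
      = f_switch p ((\<alpha> @ \<gamma>) \<frown> \<beta>) (length (out_word t oo s0 (\<alpha> @ \<gamma>)) + i)" for \<beta> i
    using fun_cong[OF transducer_for_same_state_same_output[OF assms(2) \<alpha> \<alpha>\<gamma>, of \<beta>], of i]
    by simp
  moreover have "p > 0"
    using assms(1) prime_gt_0_nat by blast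
  ultimately show "p dvd length \<gamma>"
    by (intro f_switch_conc_shift_dvd)
qed

end
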